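(* Let $(G,c)$ be a colored DAG containing edges $ij$ and $kl$, and let $A\in\mathcal A_G(ij)$ and $B\in\mathcal A_G(kl)$. If $c(ij)=c(kl)$ then $\mathrm{ecr}_c(ij,kl;A,B)$ vanishes at every $\Sigma\in\mathcal M(G,c)$. If $c(ij)\neq c(kl)$, then $\mathrm{ecr}_c(ij,kl;A,B)$ does not vanish at a generic $\Sigma\in\mathcal M(G,c)$ (i.e. it vanishes only on a proper algebraic subset of $\mathcal M(G,c)$).
   Context: $G=(V,E)$ a DAG, $c:V\sqcup E\to C$ with $c(V)\cap c(E)=\emptyset$. $\mathcal M(G,c)$ is the set of $\phi_G(\Omega,\Lambda)=(I-\Lambda)^{-T}\Omega(I-\Lambda)^{-1}$ with $\Omega=\mathrm{diag}(\omega_i)$, $\omega_i>0$, $\lambda_{ij}=0$ for $ij\notin E$, $\omega_i=\omega_k$ when $c(i)=c(k)$, $\lambda_{ij}=\lambda_{kl}$ when $c(ij)=c(kl)$. With $\Sigma_{ij|K}$ the submatrix with rows $(i,K)$, columns $(j,K)$, let $\lambda_{ij|A}(\Sigma)=|\Sigma_{ij|A\setminus\{i\}}|/|\Sigma_A|$; $\mathcal A_G(ij)$ is the set of $A\subseteq V$ with $\lambda_{ij|A}(\phi_G(\Omega,\Lambda))=\lambda_{ij}$ for all parameters of the uncolored model. $\mathrm{ecr}_c(ij,kl;A,B)=|\Sigma_A|\,|\Sigma_B|\,(\lambda_{ij|A}(\Sigma)-\lambda_{kl|B}(\Sigma))$. *)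

theory Defs
  imports "Jordan_Normal_Form.Determinant" "Jordan_Normal_Form.Gauss_Jordan_Elimination"
begin

text \<open>Vertices are V = {0..<n}; an edge ij is the pair (i,j) meaning i -> j.
  A colouring is given by cV (vertex colours) and cE (edge colours).\<close>

definition inv_mat :: "real mat \<Rightarrow> real mat" where
  "inv_mat M = the (mat_inverse M)"

definition Omega_mat :: "nat \<Rightarrow> (nat \<Rightarrow> real) \<Rightarrow> real mat" where
  "Omega_mat n w = mat n n (\<lambda>(i,j). if i = j then w i else 0)"

definition phiG :: "nat \<Rightarrow> (nat \<Rightarrow> real) \<Rightarrow> real mat \<Rightarrow> real mat" where
  "phiG n w L = transpose_mat (inv_mat (1\<^sub>m n - L)) * Omega_mat n w * inv_mat (1\<^sub>m n - L)"

definition params :: "nat \<Rightarrow> (nat \<times> nat) set \<Rightarrow> (nat \<Rightarrow> real) \<Rightarrow> real mat \<Rightarrow> bool" where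
  "params n E w L \<longleftrightarrow> L \<in> carrier_mat n n \<and> (\<forall>i<n. w i > 0) \<and>
     (\<forall>i<n. \<forall>j<n. (i,j) \<notin> E \<longrightarrow> L $$ (i,j) = 0)"

definition params_col :: "nat \<Rightarrow> (nat \<times> nat) set \<Rightarrow> (nat \<Rightarrow> 'c) \<Rightarrow> (nat \<times> nat \<Rightarrow> 'c)
    \<Rightarrow> (nat \<Rightarrow> real) \<Rightarrow> real mat \<Rightarrow> bool" where
  "params_col n E cV cE w L \<longleftrightarrow> params n E w L \<and>
     (\<forall>i<n. \<forall>k<n. cV i = cV k \<longrightarrow> w i = w k) \<and>
     (\<forall>e\<in>E. \<forall>f\<in>E. cE e = cE f \<longrightarrow> L $$ e = L $$ f)"

definition model_col :: "nat \<Rightarrow> (nat \<times> nat) set \<Rightarrow> (nat \<Rightarrow> 'c) \<Rightarrow> (nat \<times> nat \<Rightarrow> 'c) \<Rightarrow> real mat set" where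
  "model_col n E cV cE = {phiG n w L | w L. params_col n E cV cE w L}"

definition submat_list :: "real mat \<Rightarrow> nat list \<Rightarrow> nat list \<Rightarrow> real mat" where
  "submat_list S rs cs = mat (length rs) (length cs) (\<lambda>(a,b). S $$ (rs ! a, cs ! b))"

definition pminor :: "real mat \<Rightarrow> nat set \<Rightarrow> real" where
  "pminor S A = det (submat_list S (sorted_list_of_set A) (sorted_list_of_set A))"

definition cminor :: "real mat \<Rightarrow> nat \<Rightarrow> nat \<Rightarrow> nat set \<Rightarrow> real" where
  "cminor S i j K = det (submat_list S (i # sorted_list_of_set K) (j # sorted_list_of_set K))"

definition lam_cond :: "real mat \<Rightarrow> nat \<Rightarrow> nat \<Rightarrow> nat set \<Rightarrow> real" where
  "lam_cond S i j A = cminor S i j (A - {i}) / pminor S A"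

definition AG :: "nat \<Rightarrow> (nat \<times> nat) set \<Rightarrow> nat \<times> nat \<Rightarrow> nat set set" where
  "AG n E e = {A. A \<subseteq> {0..<n} \<and>
      (\<forall>w L. params n E w L \<longrightarrow> lam_cond (phiG n w L) (fst e) (snd e) A = L $$ e)}"

definition ecr :: "nat \<times> nat \<Rightarrow> nat \<times> nat \<Rightarrow> nat set \<Rightarrow> nat set \<Rightarrow> real mat \<Rightarrow> real" where
  "ecr e f A B S = pminor S A * pminor S B *
      (lam_cond S (fst e) (snd e) A - lam_cond S (fst f) (snd f) B)"

end

theory Submission
  imports Defs
begin

text \<open>For every \<open>A \<in> \<A>\<^sub>G(ij)\<close> the ratio \<open>\<lambda>\<^sub>i\<^sub>j\<^sub>|\<^sub>A\<close> recovers the edge weight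
  \<open>\<lambda>\<^sub>i\<^sub>j\<close>, so on the coloured model \<open>ecr\<close> factors as \<open>|\<Sigma>\<^sub>A| |\<Sigma>\<^sub>B| (\<lambda>\<^sub>i\<^sub>j - \<lambda>\<^sub>k\<^sub>l)\<close>.
  Equal colours force \<open>\<lambda>\<^sub>i\<^sub>j = \<lambda>\<^sub>k\<^sub>l\<close>. For distinct colours, a single parameter
  with \<open>\<lambda>\<^sub>i\<^sub>j = 1\<close> and \<open>\<lambda>\<^sub>k\<^sub>l = 2\<close> is a point of the model where \<open>ecr\<close> is nonzero;
  the principal minors cannot vanish there, since division by zero would make the ratios 0.\<close>

lemma lam_cond_phiG_eq_edge_weight:
  assumes "A \<in> AG n E e" and "params n E w L"
  shows "lam_cond (phiG n w L) (fst e) (snd e) A = L $$ e"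
  using assms unfolding AG_def by blast

lemma ecr_phiG:
  assumes "A \<in> AG n E e" and "B \<in> AG n E f" and "params n E w L"
  shows "ecr e f A B (phiG n w L)
           = pminor (phiG n w L) A * pminor (phiG n w L) B * (L $$ e - L $$ f)"
  using assms by (simp add: ecr_def lam_cond_phiG_eq_edge_weight)

lemma pminor_nonzero_if_lam_cond_nonzero:
  assumes "lam_cond S i j A \<noteq> 0"
  shows "pminor S A \<noteq> 0"
  using assms unfolding lam_cond_def by auto

lemma ecr_vanishes_on_model_col_if_same_colour:
  assumes "A \<in> AG n E e" and "B \<in> AG n E f"
    and "e \<in> E" and "f \<in> E" and "cE e = cE f"
    and "S \<in> model_col n E cV cE"
  shows "ecr e f A B S = 0"
proof -
  obtain w L where S: "S = phiG n w L" and par: "params_col n E cV cE w L"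
    using assms(6) unfolding model_col_def by blast
  have "L $$ e = L $$ f"
    using par assms(3-5) unfolding params_col_def by blast
  then show ?thesis
    using ecr_phiG[OF assms(1,2)] par S unfolding params_col_def by simp
qed

lemma params_col_two_colour_classes:
  fixes a b :: real
  assumes "E \<subseteq> {0..<n} \<times> {0..<n}" and "e \<in> E" and "f \<in> E" and "cE e \<noteq> cE f"
  obtains w L where "params_col n E cV cE w L" and "L $$ e = a" and "L $$ f = b"
proof
  define L :: "real mat" where
    "L = mat n n (\<lambda>d. if d \<in> E \<and> cE d = cE e then a else if d \<in> E \<and> cE d = cE f then b else 0)"
  have L_edge: "L $$ d = (if cE d = cE e then a else if cE d = cE f then b else 0)"
    if "d \<in> E" for d
    using that assms(1) unfolding L_def by (cases d) auto
  have "params n E (\<lambda>_. 1) L"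
    unfolding params_def L_def by auto
  moreover have "L $$ d = L $$ d'" if "d \<in> E" "d' \<in> E" "cE d = cE d'" for d d'
    using that by (simp add: L_edge)
  ultimately show "params_col n E cV cE (\<lambda>_. 1) L"
    unfolding params_col_def by blast
  show "L $$ e = a" and "L $$ f = b"
    using assms(2-4) by (simp_all add: L_edge)
qed

lemma ecr_nonzero_somewhere_on_model_col_if_distinct_colours:
  assumes "E \<subseteq> {0..<n} \<times> {0..<n}"
    and "A \<in> AG n E e" and "B \<in> AG n E f"
    and "e \<in> E" and "f \<in> E" and "cE e \<noteq> cE f"
  obtains S where "S \<in> model_col n E cV cE" and "ecr e f A B S \<noteq> 0"
proof -
  obtain w L where par: "params_col n E cV cE w L" and "L $$ e = 1" and "L $$ f = 2"
    using params_col_two_colour_classes[OF assms(1,4-6)] .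
  define S where "S = phiG n w L"
  have par_unc: "params n E w L"
    using par unfolding params_col_def by blast
  have lam_e: "lam_cond S (fst e) (snd e) A = 1" and lam_f: "lam_cond S (fst f) (snd f) B = 2"
    using lam_cond_phiG_eq_edge_weight[OF assms(2) par_unc]
      lam_cond_phiG_eq_edge_weight[OF assms(3) par_unc] \<open>L $$ e = 1\<close> \<open>L $$ f = 2\<close>
    by (simp_all add: S_def)
  moreover have "pminor S A \<noteq> 0"
    using lam_e by (intro pminor_nonzero_if_lam_cond_nonzero[of S "fst e" "snd e"]) simp
  moreover have "pminor S B \<noteq> 0"
    using lam_f by (intro pminor_nonzero_if_lam_cond_nonzero[of S "fst f" "snd f"]) simp
  ultimately have "ecr e f A B S \<noteq> 0"
    unfolding ecr_def by simp
  moreover have "S \<in> model_col n E cV cE"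
    using par unfolding model_col_def S_def by blast
  ultimately show ?thesis using that by blast
qed

theorem proposition5p2:
  fixes n :: nat and E :: "(nat \<times> nat) set"
    and cV :: "nat \<Rightarrow> 'c" and cE :: "nat \<times> nat \<Rightarrow> 'c"
    and i j k l :: nat and A B :: "nat set"
  assumes "E \<subseteq> {0..<n} \<times> {0..<n}"
    and "acyclic E"
    and "cV ` {0..<n} \<inter> cE ` E = {}"
    and "(i,j) \<in> E" and "(k,l) \<in> E"
    and "A \<in> AG n E (i,j)" and "B \<in> AG n E (k,l)"
  shows "(cE (i,j) = cE (k,l) \<longrightarrow>
            (\<forall>S \<in> model_col n E cV cE. ecr (i,j) (k,l) A B S = 0))
       \<and> (cE (i,j) \<noteq> cE (k,l) \<longrightarrow>
            {S \<in> model_col n E cV cE. ecr (i,j) (k,l) A B S = 0} \<subset> model_col n E cV cE)"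
proof (intro conjI impI)
  assume "cE (i,j) = cE (k,l)"
  then show "\<forall>S \<in> model_col n E cV cE. ecr (i,j) (k,l) A B S = 0"
    using ecr_vanishes_on_model_col_if_same_colour assms(4-7) by blast
next
  assume "cE (i,j) \<noteq> cE (k,l)"
  then obtain S where "S \<in> model_col n E cV cE" and "ecr (i,j) (k,l) A B S \<noteq> 0"
    using ecr_nonzero_somewhere_on_model_col_if_distinct_colours assms(1,4-7) by metis
  then show "{S \<in> model_col n E cV cE. ecr (i,j) (k,l) A B S = 0} \<subset> model_col n E cV cE"
    by blast
qed

end
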